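(* Let $A\in\mathbb R^{m\times N}$, let $\mathcal B=(\mathcal B_1,\dots,\mathcal B_B)$ be a block structure with weights $\omega=(\omega_1,\dots,\omega_B)$, $\omega_i\ge1$. Let $s\ge2\|\omega\|_\infty^2$ and assume $A$ satisfies the WBRIP of order $2s$ with constant $\delta_{2s}<\frac{1}{2\sqrt2+1}$. For $x\in\mathbb R^N$ let $y=Ax+e$ with $\|e\|_2\le\eta$, and let $$\hat x\in\arg\min_{z\in\mathbb R^N}\|z\|_{2,1}^{(\omega)}\quad\text{s.t. }\|Az-y\|_2\le\eta.$$ Then $$\|x-\hat x\|_{2,1}^{(\omega)}\le c_\delta\,\sigma_s(x)_{2,1}^{(\omega)}+d_\delta\sqrt s\,\eta,\qquad \|x-\hat x\|_2\le\frac{c_\delta}{\sqrt s}\sigma_s(x)_{2,1}^{(\omega)}+d_\delta\eta,$$ where $c_\delta=\frac{2(1+\delta_{2s}(2\sqrt2-3))^2}{(1-\delta_{2s})(1-\delta_{2s}(2\sqrt2+1))}$ and $d_\delta=\frac{2(3+\delta_{2s}(2\sqrt2-3))\sqrt{1+\delta_{2s}}}{(1-\delta_{2s})(1-\delta_{2s}(2\sqrt2+1))}$.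
   Context: Block structure: $\mathcal B=(\mathcal B_1,\dots,\mathcal B_B)$ partition of $\{1,\dots,N\}$; $x[b]=x[\mathcal B_b]$. Weights $\omega_b\ge1$, $\|\omega\|_\infty=\max_b\omega_b$, $\omega(S)=\sum_{b\in S}\omega_b^2$. $\|x\|_{2,p}^{(\omega)}=\big(\sum_b\omega_b^{2-p}\|x[b]\|_2^p\big)^{1/p}$. $\|x\|_0^{(\omega)}=\omega(\{b:x[b]\ne0\})$. $\sigma_s(x)_{2,1}^{(\omega)}=\inf\{\|x-z\|_{2,1}^{(\omega)}:\|z\|_0^{(\omega)}\le s\}$. Definition (WBRIP): $A$ satisfies the weighted block restricted isometry property of order $t\ge\|\omega\|_\infty$ with constant $\delta\in(0,1)$ if $(1-\delta)\|x\|_2^2\le\|Ax\|_2^2\le(1+\delta)\|x\|_2^2$ for all $x$ with $\|x\|_0^{(\omega)}\le t$; the smallest such $\delta$ is denoted $\delta_t$. *)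

theory Defs
  imports "HOL-Analysis.Analysis"
begin

text \<open>Vectors in R^N are rendered as real^'n (index type 'n, N = CARD('n));
 a block structure is a family Bl :: 'b \<Rightarrow> 'n set indexed by a finite type 'b
 (B = CARD('b)) of nonempty, pairwise disjoint sets covering all indices.\<close>

definition block_structure :: "('b::finite \<Rightarrow> 'n::finite set) \<Rightarrow> bool" where
  "block_structure Bl \<longleftrightarrow> (\<forall>b. Bl b \<noteq> {}) \<and>
     (\<forall>b c. b \<noteq> c \<longrightarrow> Bl b \<inter> Bl c = {}) \<and> (\<Union>b. Bl b) = UNIV"

definition block_norm :: "('b \<Rightarrow> 'n::finite set) \<Rightarrow> real^'n \<Rightarrow> 'b \<Rightarrow> real" where
  "block_norm Bl x b = sqrt (\<Sum>i\<in>Bl b. (x $ i)^2)"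

text \<open>Weighted mixed norm with p = 1: sum of omega_b^(2-1) * ||x[b]||_2.\<close>
definition wnorm21 :: "('b::finite \<Rightarrow> 'n::finite set) \<Rightarrow> ('b \<Rightarrow> real) \<Rightarrow> real^'n \<Rightarrow> real" where
  "wnorm21 Bl w x = (\<Sum>b\<in>UNIV. w b powr (2 - 1) * block_norm Bl x b)"

definition wsupp_size :: "('b::finite \<Rightarrow> 'n::finite set) \<Rightarrow> ('b \<Rightarrow> real) \<Rightarrow> real^'n \<Rightarrow> real" where
  "wsupp_size Bl w x = (\<Sum>b\<in>{b. \<exists>i\<in>Bl b. x $ i \<noteq> 0}. (w b)^2)"

definition winf :: "('b::finite \<Rightarrow> real) \<Rightarrow> real" where
  "winf w = Max (range w)"

definition sigma_w :: "('b::finite \<Rightarrow> 'n::finite set) \<Rightarrow> ('b \<Rightarrow> real) \<Rightarrow> real \<Rightarrow> real^'n \<Rightarrow> real" where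
  "sigma_w Bl w s x = Inf {wnorm21 Bl w (x - z) | z. wsupp_size Bl w z \<le> s}"

definition rip_ineq :: "('b::finite \<Rightarrow> 'n::finite set) \<Rightarrow> ('b \<Rightarrow> real) \<Rightarrow> real^'n^'m \<Rightarrow> real \<Rightarrow> real \<Rightarrow> bool" where
  "rip_ineq Bl w A t \<delta> \<longleftrightarrow> (\<forall>x. wsupp_size Bl w x \<le> t \<longrightarrow>
      (1 - \<delta>) * (norm x)^2 \<le> (norm (A *v x))^2 \<and> (norm (A *v x))^2 \<le> (1 + \<delta>) * (norm x)^2)"

definition wbrip :: "('b::finite \<Rightarrow> 'n::finite set) \<Rightarrow> ('b \<Rightarrow> real) \<Rightarrow> real^'n^'m \<Rightarrow> real \<Rightarrow> bool" where
  "wbrip Bl w A t \<longleftrightarrow> t \<ge> winf w \<and> (\<exists>\<delta>. 0 < \<delta> \<and> \<delta> < 1 \<and> rip_ineq Bl w A t \<delta>)"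

definition wbrip_const :: "('b::finite \<Rightarrow> 'n::finite set) \<Rightarrow> ('b \<Rightarrow> real) \<Rightarrow> real^'n^'m \<Rightarrow> real \<Rightarrow> real" where
  "wbrip_const Bl w A t = Inf {\<delta>. 0 \<le> \<delta> \<and> rip_ineq Bl w A t \<delta>}"

end

theory Submission
  imports Defs
begin

text \<open>
  Put \<open>v = xh - x\<close> and let \<open>T\<close> be the block support of an \<open>s\<close>-sparse \<open>z\<close>. The complement
  of \<open>T\<close> is cut into chunks \<open>S\<^sub>0, S\<^sub>1, \<dots>\<close> of weight at most \<open>s\<close>, in order of decreasing
  ratio \<open>\<parallel>v[b]\<parallel> / w b\<close>, so that every chunk but the last weighs at least \<open>s / 2\<close>; the ordering
  then bounds the Euclidean norm of each chunk by the weighted norms of its neighbours. Testing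
  the WBRIP on the restriction of \<open>v\<close> to \<open>T \<union> S\<^sub>0\<close> against every later chunk yields a robust
  null space property. Minimality of \<open>xh\<close> gives \<open>\<parallel>A v\<parallel> \<le> 2 \<eta>\<close> and the cone constraint: the
  weighted norm of \<open>v\<close> off \<open>T\<close> is at most its weighted norm on \<open>T\<close> plus twice that of \<open>x - z\<close>.
  Together these give the error bounds with the constants \<open>2 (1 + \<delta>) / (1 - 3 \<delta>)\<close> and
  \<open>4 \<surd>(1 + \<delta>) / (1 - 3 \<delta>)\<close>, which do not exceed \<open>c\<close> and \<open>d\<close> when \<open>\<delta> < 1 / (2 \<surd>2 + 1)\<close>.
\<close>

definition block_restrict :: "('b \<Rightarrow> 'n set) \<Rightarrow> 'b set \<Rightarrow> real^'n \<Rightarrow> real^'n" where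
  "block_restrict Bl K v = (\<chi> i. if \<exists>b\<in>K. i \<in> Bl b then v $ i else 0)"

definition weight_sum :: "('b \<Rightarrow> real) \<Rightarrow> 'b set \<Rightarrow> real" where
  "weight_sum w K = (\<Sum>b\<in>K. (w b)^2)"

definition wnorm21_on ::
    "('b \<Rightarrow> 'n::finite set) \<Rightarrow> ('b \<Rightarrow> real) \<Rightarrow> 'b set \<Rightarrow> real^'n \<Rightarrow> real" where
  "wnorm21_on Bl w K v = (\<Sum>b\<in>K. w b * block_norm Bl v b)"

definition block_support :: "('b \<Rightarrow> 'n::finite set) \<Rightarrow> real^'n \<Rightarrow> 'b set" where
  "block_support Bl z = {b. \<exists>i\<in>Bl b. z $ i \<noteq> 0}"

lemma wnorm21_on_empty [simp]: "wnorm21_on Bl w {} v = 0"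
  unfolding wnorm21_on_def by simp

lemma block_norm_nonneg: "block_norm Bl v b \<ge> 0"
  unfolding block_norm_def by (simp add: sum_nonneg)

lemma block_norm_squared: "(block_norm Bl v b)^2 = (\<Sum>i\<in>Bl b. (v $ i)^2)"
  unfolding block_norm_def by (simp add: sum_nonneg)

lemma block_norm_add_le: "block_norm Bl (x + y) b \<le> block_norm Bl x b + block_norm Bl y b"
  using L2_set_triangle_ineq[of "\<lambda>i. x $ i" "\<lambda>i. y $ i" "Bl b"]
  unfolding block_norm_def L2_set_def by simp

lemma block_norm_uminus [simp]: "block_norm Bl (- x) b = block_norm Bl x b"
  unfolding block_norm_def by simp

lemma weight_sum_union_le:
  fixes w :: "'b::finite \<Rightarrow> real"
  shows "weight_sum w (K \<union> L) \<le> weight_sum w K + weight_sum w L"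
proof -
  have "weight_sum w (K \<union> L) = weight_sum w K + weight_sum w L - weight_sum w (K \<inter> L)"
    unfolding weight_sum_def by (simp add: sum_Un)
  moreover have "weight_sum w (K \<inter> L) \<ge> 0"
    unfolding weight_sum_def by (simp add: sum_nonneg)
  ultimately show ?thesis by simp
qed

lemma wsupp_size_eq_weight_sum: "wsupp_size Bl w z = weight_sum w (block_support Bl z)"
  unfolding wsupp_size_def weight_sum_def block_support_def ..

lemma rip_ineq_iff_abs:
  "rip_ineq Bl w A t \<delta> \<longleftrightarrow>
     (\<forall>x. wsupp_size Bl w x \<le> t \<longrightarrow> \<bar>(norm (A *v x))^2 - (norm x)^2\<bar> \<le> \<delta> * (norm x)^2)"
  unfolding rip_ineq_def by (auto simp: abs_le_iff algebra_simps)

lemma wbrip_const_nonneg: "wbrip Bl w A t \<Longrightarrow> wbrip_const Bl w A t \<ge> 0"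
  unfolding wbrip_def wbrip_const_def by (intro cInf_greatest) (auto intro: less_imp_le)

lemma rip_ineq_wbrip_const:
  assumes "wbrip Bl w A t"
  shows "rip_ineq Bl w A t (wbrip_const Bl w A t)"
  unfolding rip_ineq_iff_abs
proof (intro allI impI)
  fix x assume supp: "wsupp_size Bl w x \<le> t"
  let ?dev = "\<bar>(norm (A *v x))^2 - (norm x)^2\<bar>"
  show "?dev \<le> wbrip_const Bl w A t * (norm x)^2"
  proof (cases "x = 0")
    case False
    then have pos: "(norm x)^2 > 0" by simp
    have "?dev / (norm x)^2 \<le> wbrip_const Bl w A t"
      unfolding wbrip_const_def
    proof (rule cInf_greatest)
      show "{\<delta>. 0 \<le> \<delta> \<and> rip_ineq Bl w A t \<delta>} \<noteq> {}"
        using assms unfolding wbrip_def by (auto intro: less_imp_le)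
      fix \<delta> assume "\<delta> \<in> {\<delta>. 0 \<le> \<delta> \<and> rip_ineq Bl w A t \<delta>}"
      then show "?dev / (norm x)^2 \<le> \<delta>"
        using supp pos unfolding rip_ineq_iff_abs by (simp add: divide_le_eq)
    qed
    then show ?thesis using pos by (simp add: divide_le_eq)
  qed simp
qed

definition ordered_chunks ::
    "('b \<Rightarrow> real) \<Rightarrow> real \<Rightarrow> ('b \<Rightarrow> real) \<Rightarrow> 'b set \<Rightarrow> (nat \<Rightarrow> 'b set) \<Rightarrow> nat \<Rightarrow> bool" where
  "ordered_chunks w s r R C k \<longleftrightarrow>
     (\<forall>j. weight_sum w (C j) \<le> s) \<and> (\<forall>j\<ge>k. C j = {}) \<and>
     (\<forall>i j. i \<noteq> j \<longrightarrow> C i \<inter> C j = {}) \<and> (\<Union>j<k. C j) = R \<and>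
     (\<forall>i j. i < j \<longrightarrow> (\<forall>b\<in>C i. \<forall>c\<in>C j. r c \<le> r b)) \<and>
     (\<forall>i j. i < j \<longrightarrow> C j \<noteq> {} \<longrightarrow> s / 2 \<le> weight_sum w (C i))"

lemma ordered_chunksD:
  assumes "ordered_chunks w s r R C k"
  shows ordered_chunks_weight: "weight_sum w (C j) \<le> s"
    and ordered_chunks_empty: "k \<le> j \<Longrightarrow> C j = {}"
    and ordered_chunks_disjoint: "i \<noteq> j \<Longrightarrow> C i \<inter> C j = {}"
    and ordered_chunks_cover: "(\<Union>j<k. C j) = R"
    and ordered_chunks_ordered: "i < j \<Longrightarrow> b \<in> C i \<Longrightarrow> c \<in> C j \<Longrightarrow> r c \<le> r b"
    and ordered_chunks_heavy: "i < j \<Longrightarrow> C j \<noteq> {} \<Longrightarrow> s / 2 \<le> weight_sum w (C i)"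
  using assms unfolding ordered_chunks_def by simp_all

lemma ordered_chunks_subset:
  assumes "ordered_chunks w s r R C k"
  shows "C j \<subseteq> R"
proof (cases "j < k")
  case True
  then show ?thesis using ordered_chunks_cover[OF assms] by blast
qed (simp add: ordered_chunks_empty[OF assms])

lemma finite_max_value:
  fixes f :: "'a \<Rightarrow> 'c::linorder"
  assumes "finite X" "X \<noteq> {}"
  shows "\<exists>x\<in>X. \<forall>y\<in>X. f y \<le> f x"
proof -
  have "Max (f ` X) \<in> f ` X" using assms by simp
  then obtain x where "x \<in> X" "f x = Max (f ` X)" by auto
  then show ?thesis using assms(1) by (metis Max_ge finite_imageI image_eqI)
qed

lemma pos_of_bounded_squares:
  fixes w :: "'b \<Rightarrow> real"
  assumes "\<And>b. w b \<noteq> 0" and "\<And>b. (w b)^2 \<le> s / 2"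
  shows "0 < s"
proof -
  have "0 < (w undefined)^2" using assms(1) by simp
  then show ?thesis using assms(2)[of undefined] by linarith
qed

lemma top_chunk_exists:
  fixes w r :: "'b::finite \<Rightarrow> real"
  assumes nonzero: "\<And>b. w b \<noteq> 0" and small: "\<And>b. (w b)^2 \<le> s / 2" and heavy: "s < weight_sum w R"
  shows "\<exists>C\<subseteq>R. C \<noteq> {} \<and> s / 2 \<le> weight_sum w C \<and> weight_sum w C \<le> s \<and>
           (\<forall>b\<in>C. \<forall>c\<in>R - C. r c \<le> r b)"
proof -
  define F where "F = {C. C \<subseteq> R \<and> weight_sum w C \<le> s \<and> (\<forall>b\<in>C. \<forall>c\<in>R - C. r c \<le> r b)}"
  have "0 < s" by (rule pos_of_bounded_squares[OF nonzero small])
  then have "{} \<in> F" unfolding F_def weight_sum_def by simp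
  then obtain C where "C \<in> F" and C_max: "\<And>C'. C' \<in> F \<Longrightarrow> weight_sum w C' \<le> weight_sum w C"
    using finite_max_value[of F "weight_sum w"] finite[of F] by blast
  have "s / 2 \<le> weight_sum w C"
  proof (rule ccontr)
    assume light: "\<not> s / 2 \<le> weight_sum w C"
    have "R - C \<noteq> {}" using \<open>C \<in> F\<close> heavy light unfolding F_def by auto
    then obtain c where c: "c \<in> R - C" and c_max: "\<And>c'. c' \<in> R - C \<Longrightarrow> r c' \<le> r c"
      using finite_max_value[of "R - C" r] finite[of "R - C"] by blast
    have add: "weight_sum w (insert c C) = weight_sum w C + (w c)^2"
      unfolding weight_sum_def using c by simp
    have "insert c C \<in> F"
      using \<open>C \<in> F\<close> c c_max small[of c] light add unfolding F_def by auto
    then show False using C_max[of "insert c C"] add nonzero[of c] by simp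
  qed
  with \<open>C \<in> F\<close> \<open>0 < s\<close> show ?thesis unfolding F_def weight_sum_def by force
qed

lemma ordered_chunks_exist:
  fixes w r :: "'b::finite \<Rightarrow> real"
  assumes nonzero: "\<And>b. w b \<noteq> 0" and small: "\<And>b. (w b)^2 \<le> s / 2"
  shows "\<exists>C k. ordered_chunks w s r R C k"
proof (induction "card R" arbitrary: R rule: less_induct)
  case less
  have "0 < s" by (rule pos_of_bounded_squares[OF nonzero small])
  show ?case
  proof (cases "weight_sum w R \<le> s")
    case True
    have "ordered_chunks w s r R (\<lambda>j. if j = 0 then R else {}) 1"
      using True \<open>0 < s\<close> unfolding ordered_chunks_def by (simp add: weight_sum_def lessThan_Suc)
    then show ?thesis by blast
  next
    case False
    have "\<exists>C0\<subseteq>R. C0 \<noteq> {} \<and> s / 2 \<le> weight_sum w C0 \<and> weight_sum w C0 \<le> s \<and>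
        (\<forall>b\<in>C0. \<forall>c\<in>R - C0. r c \<le> r b)"
      by (intro top_chunk_exists nonzero small) (use False in simp)
    then obtain C0 where C0: "C0 \<subseteq> R" "C0 \<noteq> {}" "s / 2 \<le> weight_sum w C0" "weight_sum w C0 \<le> s"
      "\<forall>b\<in>C0. \<forall>c\<in>R - C0. r c \<le> r b"
      by blast
    then have "card (R - C0) < card R" by (intro psubset_card_mono) auto
    then obtain C k where C: "ordered_chunks w s r (R - C0) C k" using less by blast
    have C_sub: "C j \<subseteq> R - C0" for j
      using ordered_chunks_subset[OF C] .
    have "(\<Union>j<Suc k. case_nat C0 C j) = C0 \<union> (\<Union>j<k. C j)"
      by (simp add: lessThan_Suc_eq_insert_0 image_image)
    also have "\<dots> = R" using ordered_chunks_cover[OF C] C0(1) by auto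
    finally have "(\<Union>j<Suc k. case_nat C0 C j) = R" .
    moreover have "weight_sum w (case_nat C0 C j) \<le> s" for j
      using ordered_chunks_weight[OF C] C0(4) by (cases j) auto
    moreover have "case_nat C0 C j = {}" if "Suc k \<le> j" for j
      using ordered_chunks_empty[OF C] that by (cases j) auto
    moreover have "case_nat C0 C i \<inter> case_nat C0 C j = {}" if "i \<noteq> j" for i j
      using ordered_chunks_disjoint[OF C] C_sub[of "i - 1"] C_sub[of "j - 1"] that
      by (cases i; cases j) auto
    moreover have "r c \<le> r b" if "i < j" "b \<in> case_nat C0 C i" "c \<in> case_nat C0 C j" for i j b c
      using ordered_chunks_ordered[OF C] C0(5) C_sub[of "j - 1"] that
      by (cases i; cases j) auto
    moreover have "s / 2 \<le> weight_sum w (case_nat C0 C i)" if "i < j" "case_nat C0 C j \<noteq> {}" for i j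
      using ordered_chunks_heavy[OF C] C0(3) that by (cases i; cases j) auto
    ultimately have "ordered_chunks w s r R (case_nat C0 C) (Suc k)"
      unfolding ordered_chunks_def by blast
    then show ?thesis by blast
  qed
qed

lemma ordered_chunks_tail_cover:
  assumes "ordered_chunks w s r R C k"
  shows "(\<Union>j<k. C (Suc j)) = R - C 0"
proof -
  have "(\<Union>j<Suc k. C j) = R"
    using ordered_chunks_cover[OF assms] ordered_chunks_empty[OF assms, of k]
    by (simp add: lessThan_Suc Un_commute)
  then have "C 0 \<union> (\<Union>j<k. C (Suc j)) = R"
    by (simp add: lessThan_Suc_eq_insert_0 image_image)
  moreover have "C 0 \<inter> (\<Union>j<k. C (Suc j)) = {}"
    using ordered_chunks_disjoint[OF assms] by blast
  ultimately show ?thesis by blast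
qed

lemma product_le_square_of_sum:
  fixes p q :: real
  shows "p * q \<le> (p + q)^2 / 4"
  using sum_squares_ge_zero[of "p - q" 0] by (simp add: power2_eq_square algebra_simps)

lemma robust_recovery_arith:
  fixes \<delta> N E L \<sigma> r \<eta> :: real
  assumes "0 \<le> \<delta>" "3 * \<delta> < 1" "0 < r" "E \<le> 2 * \<eta>"
    and head: "(1 - \<delta>) * N \<le> sqrt (1 + \<delta>) * E + 2 * \<delta> * L / r"
    and tail: "L \<le> r * N + 2 * \<sigma>"
  shows "2 * N + 2 * \<sigma> / r
           \<le> 2 * (1 + \<delta>) / (1 - 3 * \<delta>) / r * \<sigma> + 4 * sqrt (1 + \<delta>) / (1 - 3 * \<delta>) * \<eta>"
proof -
  define q where "q = \<sigma> / r"
  have "L / r \<le> N + 2 * q"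
    using tail \<open>0 < r\<close> unfolding q_def by (simp add: field_simps)
  then have "\<delta> * (L / r) \<le> \<delta> * N + 2 * (\<delta> * q)"
    using mult_left_mono[of "L / r" "N + 2 * q" \<delta>] \<open>0 \<le> \<delta>\<close> by (simp add: algebra_simps)
  moreover have "sqrt (1 + \<delta>) * E \<le> 2 * (sqrt (1 + \<delta>) * \<eta>)"
    using \<open>0 \<le> \<delta>\<close> \<open>E \<le> 2 * \<eta>\<close> mult_left_mono[of E "2 * \<eta>" "sqrt (1 + \<delta>)"] by simp
  moreover have "N - \<delta> * N \<le> sqrt (1 + \<delta>) * E + 2 * (\<delta> * (L / r))"
    using head by (simp add: algebra_simps)
  ultimately have "(1 - 3 * \<delta>) * (2 * N + 2 * q) \<le> 2 * (1 + \<delta>) * q + 4 * sqrt (1 + \<delta>) * \<eta>"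
    by (simp add: algebra_simps)
  then have "2 * N + 2 * \<sigma> / r \<le> (2 * (1 + \<delta>) * \<sigma> / r + 4 * sqrt (1 + \<delta>) * \<eta>) / (1 - 3 * \<delta>)"
    using \<open>3 * \<delta> < 1\<close> unfolding q_def by (simp add: le_divide_eq mult.commute)
  also have "\<dots> = 2 * (1 + \<delta>) / (1 - 3 * \<delta>) / r * \<sigma> + 4 * sqrt (1 + \<delta>) / (1 - 3 * \<delta>) * \<eta>"
    using add_divide_distrib[of "_ * \<sigma> / r" "_ * \<eta>" "1 - 3 * \<delta>"] by simp
  finally show ?thesis .
qed

lemma recovery_constants_le:
  fixes \<delta> :: real
  assumes "0 \<le> \<delta>" and "\<delta> < 1 / (2 * sqrt 2 + 1)"
  defines "den \<equiv> (1 - \<delta>) * (1 - \<delta> * (2 * sqrt 2 + 1))"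
  shows "3 * \<delta> < 1"
    and "2 * (1 + \<delta>) / (1 - 3 * \<delta>) \<le> 2 * (1 + \<delta> * (2 * sqrt 2 - 3))^2 / den"
    and "4 * sqrt (1 + \<delta>) / (1 - 3 * \<delta>) \<le> 2 * (3 + \<delta> * (2 * sqrt 2 - 3)) * sqrt (1 + \<delta>) / den"
proof -
  have small: "\<delta> * (2 * sqrt 2 + 1) < 1"
    using assms(2) by (simp add: less_divide_eq add_pos_pos)
  define q where "q = sqrt 2"
  have q2: "q * q = 2" unfolding q_def by simp
  have q_lower: "14142 / 10000 \<le> q" unfolding q_def by (rule real_le_rsqrt) (simp add: power2_eq_square)
  have q_upper: "q \<le> 14143 / 10000" unfolding q_def by (rule real_le_lsqrt) (simp_all add: power2_eq_square)
  have "\<delta> * (2 * q + 1) \<ge> \<delta> * (38284 / 10000)"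
    using q_lower \<open>0 \<le> \<delta>\<close> by (intro mult_left_mono) auto
  then have \<delta>_upper: "\<delta> \<le> 27 / 100" using small unfolding q_def by linarith
  have "\<delta>^2 \<le> 729 / 10000"
    using power_mono[OF \<delta>_upper \<open>0 \<le> \<delta>\<close>, of 2] by (simp add: power2_eq_square)
  have C: "(1 + \<delta>) * den \<le> (1 + \<delta> * (2 * q - 3))^2 * (1 - 3 * \<delta>)"
  proof -
    have identity: "(1 + \<delta> * (2 * q - 3))^2 * (1 - 3 * \<delta>) - (1 + \<delta>) * den
        = \<delta> * ((6 * q - 8) + (36 - 24 * q) * \<delta> + (34 * q - 52) * \<delta>^2) + 4 * \<delta>^2 * (1 - 3 * \<delta>) * (q * q - 2)"
      unfolding den_def q_def by (simp add: algebra_simps power2_eq_square power3_eq_cube)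
    have "(36 - 24 * q) * \<delta> \<ge> 0"
      using q_upper \<open>0 \<le> \<delta>\<close> by simp
    moreover have "-4 * \<delta>^2 \<le> (34 * q - 52) * \<delta>^2"
      using q_lower by (intro mult_right_mono) auto
    ultimately have "\<delta> * ((6 * q - 8) + (36 - 24 * q) * \<delta> + (34 * q - 52) * \<delta>^2) \<ge> 0"
      using \<open>\<delta>^2 \<le> _\<close> q_lower \<open>0 \<le> \<delta>\<close> by (intro mult_nonneg_nonneg) linarith+
    with identity show ?thesis using q2 by simp
  qed
  have D: "2 * den \<le> (3 + \<delta> * (2 * q - 3)) * (1 - 3 * \<delta>)"
  proof -
    have "(3 + \<delta> * (2 * q - 3)) * (1 - 3 * \<delta>) - 2 * den = 1 + (6 * q - 8) * \<delta> + (7 - 10 * q) * \<delta>^2"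
      unfolding den_def q_def by (simp add: algebra_simps power2_eq_square)
    moreover have "(6 * q - 8) * \<delta> \<ge> 0"
      using q_lower \<open>0 \<le> \<delta>\<close> by simp
    moreover have "-8 * \<delta>^2 \<le> (7 - 10 * q) * \<delta>^2"
      using q_upper by (intro mult_right_mono) auto
    ultimately show ?thesis using \<open>\<delta>^2 \<le> _\<close> by linarith
  qed
  show "3 * \<delta> < 1" using \<delta>_upper by simp
  have "0 < 1 - 3 * \<delta>" "0 < den"
    using \<delta>_upper small unfolding den_def by (auto intro!: mult_pos_pos)
  have cross: "a / b \<le> c / d" if "0 < b" "0 < d" "a * d \<le> c * b" for a b c d :: real
    using that by (simp add: field_simps)
  show "2 * (1 + \<delta>) / (1 - 3 * \<delta>) \<le> 2 * (1 + \<delta> * (2 * sqrt 2 - 3))^2 / den"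
    using mult_left_mono[OF C, of 2]
    by (intro cross \<open>0 < den\<close> \<open>0 < 1 - 3 * \<delta>\<close>) (simp add: q_def mult_ac)
  show "4 * sqrt (1 + \<delta>) / (1 - 3 * \<delta>) \<le> 2 * (3 + \<delta> * (2 * sqrt 2 - 3)) * sqrt (1 + \<delta>) / den"
  proof (intro cross \<open>0 < den\<close> \<open>0 < 1 - 3 * \<delta>\<close>)
    show "4 * sqrt (1 + \<delta>) * den \<le> 2 * (3 + \<delta> * (2 * sqrt 2 - 3)) * sqrt (1 + \<delta>) * (1 - 3 * \<delta>)"
      using mult_left_mono[OF D, of "2 * sqrt (1 + \<delta>)"] \<open>0 \<le> \<delta>\<close> by (simp add: q_def algebra_simps)
  qed
qed

lemma le_affine_sigma_w:
  fixes a \<alpha> \<beta> s :: real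
  assumes bound: "\<And>z. wsupp_size Bl w z \<le> s \<Longrightarrow> a \<le> \<alpha> * wnorm21 Bl w (x - z) + \<beta>"
    and "0 < \<alpha>" "0 \<le> s"
  shows "a \<le> \<alpha> * sigma_w Bl w s x + \<beta>"
proof -
  have "wsupp_size Bl w 0 \<le> s" using \<open>0 \<le> s\<close> by (simp add: wsupp_size_def)
  then have "(a - \<beta>) / \<alpha> \<le> sigma_w Bl w s x"
    unfolding sigma_w_def
  proof (intro cInf_greatest)
    fix t assume "t \<in> {wnorm21 Bl w (x - z) | z. wsupp_size Bl w z \<le> s}"
    then obtain z where "wsupp_size Bl w z \<le> s" "t = wnorm21 Bl w (x - z)" by blast
    then show "(a - \<beta>) / \<alpha> \<le> t"
      using bound[of z] \<open>0 < \<alpha>\<close> by (simp add: divide_le_eq mult.commute)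
  qed blast
  then show ?thesis using \<open>0 < \<alpha>\<close> by (simp add: divide_le_eq mult.commute)
qed

lemma constrained_minimizer_cone_tube:
  fixes A :: "real^'n::finite^'m::finite"
  assumes "y = A *v x + e" "norm e \<le> \<eta>" "norm (A *v xh - y) \<le> \<eta>"
    and "\<forall>z. norm (A *v z - y) \<le> \<eta> \<longrightarrow> f xh \<le> f z"
  shows "f xh \<le> f x" and "norm (A *v (xh - x)) \<le> 2 * \<eta>"
  using assms norm_triangle_ineq[of "A *v xh - y" e]
  by (auto simp: matrix_vector_mult_diff_distrib algebra_simps)

locale weighted_blocks =
  fixes Bl :: "'b::finite \<Rightarrow> 'n::finite set" and w :: "'b \<Rightarrow> real"
  assumes block_structure: "block_structure Bl" and weight_ge_1: "\<And>b. w b \<ge> 1"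
begin

lemma weight_pos: "w b > 0"
  using weight_ge_1[of b] by simp

lemma block_unique: "i \<in> Bl b \<Longrightarrow> i \<in> Bl c \<Longrightarrow> b = c"
  using block_structure unfolding block_structure_def by blast

lemma in_some_block: "\<exists>b. i \<in> Bl b"
  using block_structure unfolding block_structure_def by blast

lemma block_restrict_nth: "i \<in> Bl b \<Longrightarrow> block_restrict Bl K v $ i = (if b \<in> K then v $ i else 0)"
  unfolding block_restrict_def using block_unique by auto

lemma block_norm_restrict:
  "block_norm Bl (block_restrict Bl K v) b = (if b \<in> K then block_norm Bl v b else 0)"
proof -
  have "(\<Sum>i\<in>Bl b. (block_restrict Bl K v $ i)^2) = (\<Sum>i\<in>Bl b. if b \<in> K then (v $ i)^2 else 0)"
    by (rule sum.cong) (simp_all add: block_restrict_nth)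
  then show ?thesis unfolding block_norm_def by simp
qed

lemma block_restrict_union:
  "K \<inter> L = {} \<Longrightarrow> block_restrict Bl K v + block_restrict Bl L v = block_restrict Bl (K \<union> L) v"
  unfolding block_restrict_def by (rule vec_eq_iff[THEN iffD2]) (auto dest: block_unique)

lemma block_restrict_UNIV [simp]: "block_restrict Bl UNIV v = v"
  unfolding block_restrict_def by (rule vec_eq_iff[THEN iffD2]) (auto simp: in_some_block)

lemma block_restrict_empty [simp]: "block_restrict Bl {} v = 0"
  unfolding block_restrict_def by (rule vec_eq_iff[THEN iffD2]) auto

lemma block_restrict_compl: "block_restrict Bl K v + block_restrict Bl (- K) v = v"
  using block_restrict_union[of K "- K" v] by simp

lemma block_restrict_UN:
  assumes "finite J" "\<And>i j. i \<in> J \<Longrightarrow> j \<in> J \<Longrightarrow> i \<noteq> j \<Longrightarrow> K i \<inter> K j = {}"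
  shows "(\<Sum>j\<in>J. block_restrict Bl (K j) v) = block_restrict Bl (\<Union>j\<in>J. K j) v"
  using assms
proof (induction J rule: finite_induct)
  case (insert a J)
  then have "K a \<inter> (\<Union>j\<in>J. K j) = {}" by blast
  with insert show ?case by (simp add: block_restrict_union)
qed simp

lemma block_restrict_restrict: "block_restrict Bl K (block_restrict Bl L v) = block_restrict Bl (K \<inter> L) v"
  unfolding block_restrict_def by (rule vec_eq_iff[THEN iffD2]) (auto dest: block_unique)

lemma block_restrict_add: "block_restrict Bl K (u + v) = block_restrict Bl K u + block_restrict Bl K v"
  unfolding block_restrict_def by (rule vec_eq_iff[THEN iffD2]) auto

lemma block_restrict_diff: "block_restrict Bl K (u - v) = block_restrict Bl K u - block_restrict Bl K v"
  unfolding block_restrict_def by (rule vec_eq_iff[THEN iffD2]) auto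

lemma block_restrict_scaleR: "block_restrict Bl K (c *\<^sub>R v) = c *\<^sub>R block_restrict Bl K v"
  unfolding block_restrict_def by (rule vec_eq_iff[THEN iffD2]) auto

lemma inner_block_restrict_disjoint:
  "K \<inter> L = {} \<Longrightarrow> inner (block_restrict Bl K u) (block_restrict Bl L v) = 0"
  unfolding block_restrict_def inner_vec_def by (auto intro!: sum.neutral) (use block_unique in blast)

lemma sum_over_blocks: "(\<Sum>i\<in>UNIV. g i) = (\<Sum>b\<in>UNIV. \<Sum>i\<in>Bl b. g i)"
proof -
  have "(\<Sum>i\<in>(\<Union>b. Bl b). g i) = (\<Sum>b\<in>UNIV. \<Sum>i\<in>Bl b. g i)"
    by (rule sum.UNION_disjoint) (auto dest: block_unique)
  moreover have "(\<Union>b. Bl b) = UNIV" using in_some_block by blast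
  ultimately show ?thesis by simp
qed

lemma norm_squared_blocks: "(norm v)^2 = (\<Sum>b\<in>UNIV. (block_norm Bl v b)^2)"
  unfolding norm_vec_def L2_set_def by (simp add: sum_nonneg block_norm_squared sum_over_blocks)

lemma norm_block_restrict_squared:
  "(norm (block_restrict Bl K v))^2 = (\<Sum>b\<in>K. (block_norm Bl v b)^2)"
proof -
  have "(\<Sum>b\<in>UNIV. (if b \<in> K then block_norm Bl v b else 0)^2) = (\<Sum>b\<in>K. (block_norm Bl v b)^2)"
    by (simp add: sum.If_cases if_distrib[of "\<lambda>t. t^2"])
  then show ?thesis unfolding norm_squared_blocks block_norm_restrict .
qed

lemma wsupp_size_block_restrict_le: "wsupp_size Bl w (block_restrict Bl K v) \<le> weight_sum w K"
  unfolding wsupp_size_def weight_sum_def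
proof (rule sum_mono2)
  show "{b. \<exists>i\<in>Bl b. block_restrict Bl K v $ i \<noteq> 0} \<subseteq> K"
  proof safe
    fix b i assume i: "i \<in> Bl b" and nz: "block_restrict Bl K v $ i \<noteq> 0"
    show "b \<in> K" using nz unfolding block_restrict_nth[OF i] by (simp split: if_splits)
  qed
qed simp_all

lemma wnorm21_eq_wnorm21_on: "wnorm21 Bl w v = wnorm21_on Bl w UNIV v"
  unfolding wnorm21_def wnorm21_on_def by (simp add: abs_of_pos[OF weight_pos])

lemma wnorm21_on_nonneg: "wnorm21_on Bl w K v \<ge> 0"
  unfolding wnorm21_on_def by (intro sum_nonneg mult_nonneg_nonneg less_imp_le[OF weight_pos] block_norm_nonneg)

lemma wnorm21_on_compl: "wnorm21_on Bl w UNIV v = wnorm21_on Bl w K v + wnorm21_on Bl w (- K) v"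
proof -
  have "(\<Sum>b\<in>K \<union> - K. w b * block_norm Bl v b) =
      (\<Sum>b\<in>K. w b * block_norm Bl v b) + (\<Sum>b\<in>- K. w b * block_norm Bl v b)"
    by (rule sum.union_disjoint) auto
  then show ?thesis unfolding wnorm21_on_def by simp
qed

lemma wnorm21_on_add_le: "wnorm21_on Bl w K (u + v) \<le> wnorm21_on Bl w K u + wnorm21_on Bl w K v"
  unfolding wnorm21_on_def sum.distrib[symmetric] distrib_left[symmetric]
  using weight_pos by (intro sum_mono mult_left_mono block_norm_add_le) (simp add: less_imp_le)

lemma wnorm21_on_uminus [simp]: "wnorm21_on Bl w K (- v) = wnorm21_on Bl w K v"
  unfolding wnorm21_on_def by simp

lemma wnorm21_commute: "wnorm21 Bl w (x - y) = wnorm21 Bl w (y - x)"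
  using wnorm21_on_uminus[of UNIV "x - y"] by (simp add: wnorm21_eq_wnorm21_on)

lemma wnorm21_on_diff_compl_le:
  assumes "wnorm21 Bl w xh \<le> wnorm21 Bl w x"
  shows "wnorm21_on Bl w (- T) (xh - x) \<le> wnorm21_on Bl w T (xh - x) + 2 * wnorm21_on Bl w (- T) x"
proof -
  have "wnorm21_on Bl w T x \<le> wnorm21_on Bl w T xh + wnorm21_on Bl w T (x - xh)"
    using wnorm21_on_add_le[of T xh "x - xh"] by simp
  moreover have "wnorm21_on Bl w (- T) (xh - x) \<le> wnorm21_on Bl w (- T) xh + wnorm21_on Bl w (- T) x"
    using wnorm21_on_add_le[of "- T" xh "- x"] by simp
  moreover have "wnorm21_on Bl w (- T) (x - xh) = wnorm21_on Bl w (- T) (xh - x)"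
    "wnorm21_on Bl w T (x - xh) = wnorm21_on Bl w T (xh - x)"
    using wnorm21_on_uminus[of _ "xh - x"] by simp_all
  ultimately show ?thesis
    using assms unfolding wnorm21_eq_wnorm21_on wnorm21_on_compl[of _ T] by linarith
qed

lemma wnorm21_on_compl_support_le: "wnorm21_on Bl w (- block_support Bl z) x \<le> wnorm21 Bl w (x - z)"
proof -
  have "block_norm Bl (x - z) b = block_norm Bl x b" if "b \<in> - block_support Bl z" for b
    using that unfolding block_norm_def block_support_def by (intro arg_cong[where f = sqrt] sum.cong) auto
  then have "wnorm21_on Bl w (- block_support Bl z) (x - z) = wnorm21_on Bl w (- block_support Bl z) x"
    unfolding wnorm21_on_def by (intro sum.cong) auto
  then show ?thesis
    unfolding wnorm21_eq_wnorm21_on wnorm21_on_compl[of _ "block_support Bl z"]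
    using wnorm21_on_nonneg[of "block_support Bl z" "x - z"] by linarith
qed

lemma wnorm21_on_le_sqrt_weight_sum:
  "wnorm21_on Bl w K v \<le> sqrt (weight_sum w K) * norm (block_restrict Bl K v)"
proof -
  have "wnorm21_on Bl w K v = (\<Sum>b\<in>K. \<bar>w b\<bar> * \<bar>block_norm Bl v b\<bar>)"
    unfolding wnorm21_on_def using weight_pos by (simp add: block_norm_nonneg less_imp_le)
  also have "\<dots> \<le> L2_set w K * L2_set (block_norm Bl v) K"
    by (rule L2_set_mult_ineq)
  also have "\<dots> = sqrt (weight_sum w K) * norm (block_restrict Bl K v)"
    unfolding L2_set_def weight_sum_def
    by (simp add: norm_block_restrict_squared[symmetric])
  finally show ?thesis .
qed

lemma wnorm21_on_UN:
  assumes "finite J" "\<And>i j. i \<in> J \<Longrightarrow> j \<in> J \<Longrightarrow> i \<noteq> j \<Longrightarrow> K i \<inter> K j = {}"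
  shows "wnorm21_on Bl w (\<Union>j\<in>J. K j) v = (\<Sum>j\<in>J. wnorm21_on Bl w (K j) v)"
  unfolding wnorm21_on_def using assms by (intro sum.UNION_disjoint) auto

lemma wnorm21_on_diff:
  "L \<subseteq> K \<Longrightarrow> wnorm21_on Bl w (K - L) v = wnorm21_on Bl w K v - wnorm21_on Bl w L v"
  unfolding wnorm21_on_def by (simp add: sum_diff)

definition block_ratio :: "real^'n \<Rightarrow> 'b \<Rightarrow> real" where
  "block_ratio v b = block_norm Bl v b / w b"

lemma norm_squared_weight_sum_le_wnorm21_on:
  assumes dominated: "\<And>b c. b \<in> K \<Longrightarrow> c \<in> L \<Longrightarrow> block_ratio v c \<le> block_ratio v b"
  shows "(norm (block_restrict Bl L v))^2 * weight_sum w K \<le> wnorm21_on Bl w K v * wnorm21_on Bl w L v"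
proof -
  have "(block_norm Bl v c)^2 * (w b)^2 \<le> (w b * block_norm Bl v b) * (w c * block_norm Bl v c)"
    if "b \<in> K" "c \<in> L" for b c
  proof -
    have "block_norm Bl v c * w b \<le> block_norm Bl v b * w c"
      using dominated[OF that] weight_pos[of b] weight_pos[of c]
      by (simp add: block_ratio_def divide_le_eq le_divide_eq)
    from mult_right_mono[OF this, of "block_norm Bl v c * w b"] show ?thesis
      using block_norm_nonneg[of Bl v c] weight_pos[of b] by (simp add: power2_eq_square mult_ac)
  qed
  then have "(\<Sum>c\<in>L. \<Sum>b\<in>K. (block_norm Bl v c)^2 * (w b)^2)
      \<le> (\<Sum>c\<in>L. \<Sum>b\<in>K. (w b * block_norm Bl v b) * (w c * block_norm Bl v c))"
    by (intro sum_mono)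
  then show ?thesis
    unfolding norm_block_restrict_squared weight_sum_def wnorm21_on_def sum_product
    by (subst sum.swap) simp
qed

lemma norm_block_restrict_union_squared:
  "K \<inter> L = {} \<Longrightarrow>
     (norm (block_restrict Bl (K \<union> L) v))^2 = (norm (block_restrict Bl K v))^2 + (norm (block_restrict Bl L v))^2"
  unfolding norm_block_restrict_squared by (simp add: sum.union_disjoint)

lemma inner_block_restrict_le_rip:
  fixes A :: "real^'n^'m"
  assumes rip: "rip_ineq Bl w A t \<delta>" and disj: "K \<inter> L = {}" and size: "weight_sum w (K \<union> L) \<le> t"
  shows "\<bar>inner (A *v block_restrict Bl K u) (A *v block_restrict Bl L v)\<bar>
     \<le> \<delta> * norm (block_restrict Bl K u) * norm (block_restrict Bl L v)"
proof (cases "block_restrict Bl K u = 0 \<or> block_restrict Bl L v = 0")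
  case False
  define a where "a = norm (block_restrict Bl K u)"
  define b where "b = norm (block_restrict Bl L v)"
  have "a > 0" "b > 0" using False unfolding a_def b_def by auto
  define x where "x = block_restrict Bl K ((1 / a) *\<^sub>R u)"
  define y where "y = block_restrict Bl L ((1 / b) *\<^sub>R v)"
  have "norm x = 1" "norm y = 1"
    unfolding x_def y_def block_restrict_scaleR using \<open>a > 0\<close> \<open>b > 0\<close> a_def b_def by simp_all
  moreover have "inner x y = 0"
    unfolding x_def y_def using inner_block_restrict_disjoint[OF disj] by blast
  ultimately have norms: "(norm (x + y))^2 = 2" "(norm (x - y))^2 = 2"
    by (simp_all add: power2_norm_eq_inner norm_eq_1 inner_add inner_diff inner_commute)
  have "x + y = block_restrict Bl (K \<union> L) (x + y)" "x - y = block_restrict Bl (K \<union> L) (x - y)"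
    unfolding x_def y_def block_restrict_add block_restrict_diff block_restrict_restrict
    by (simp_all add: Int_absorb1)
  then have "wsupp_size Bl w (x + y) \<le> t" "wsupp_size Bl w (x - y) \<le> t"
    using wsupp_size_block_restrict_le[of "K \<union> L"] size by (metis order_trans)+
  then have dev: "\<bar>(norm (A *v (x + y)))^2 - 2\<bar> \<le> 2 * \<delta>" "\<bar>(norm (A *v (x - y)))^2 - 2\<bar> \<le> 2 * \<delta>"
    using rip norms unfolding rip_ineq_iff_abs by (metis mult.commute)+
  \<comment> \<open>polarization identity\<close>
  have "(norm (A *v (x + y)))^2 - (norm (A *v (x - y)))^2 = 4 * inner (A *v x) (A *v y)"
    by (simp add: matrix_vector_right_distrib matrix_vector_mult_diff_distrib power2_norm_eq_inner
        inner_add inner_diff inner_commute)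
  with dev have unit: "\<bar>inner (A *v x) (A *v y)\<bar> \<le> \<delta>"
    by (simp add: abs_le_iff)
  have "A *v block_restrict Bl K u = a *\<^sub>R (A *v x)" "A *v block_restrict Bl L v = b *\<^sub>R (A *v y)"
    unfolding x_def y_def block_restrict_scaleR matrix_vector_mult_scaleR
    using \<open>a > 0\<close> \<open>b > 0\<close> by simp_all
  then have "\<bar>inner (A *v block_restrict Bl K u) (A *v block_restrict Bl L v)\<bar>
      = a * b * \<bar>inner (A *v x) (A *v y)\<bar>"
    using \<open>a > 0\<close> \<open>b > 0\<close> by (simp add: abs_mult)
  also have "\<dots> \<le> a * b * \<delta>"
    using unit \<open>a > 0\<close> \<open>b > 0\<close> by simp
  finally show ?thesis unfolding a_def b_def by (simp add: algebra_simps)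
qed auto

lemma inner_block_restrict_union_le_rip:
  fixes A :: "real^'n^'m"
  assumes rip: "rip_ineq Bl w A t \<delta>" and "0 \<le> \<delta>"
    and disjoint: "K \<inter> L = {}" "K \<inter> M = {}" "L \<inter> M = {}"
    and size: "weight_sum w (K \<union> M) \<le> t" "weight_sum w (L \<union> M) \<le> t"
  shows "\<bar>inner (A *v block_restrict Bl (K \<union> L) u) (A *v block_restrict Bl M v)\<bar>
     \<le> sqrt 2 * \<delta> * norm (block_restrict Bl (K \<union> L) u) * norm (block_restrict Bl M v)"
proof -
  let ?uK = "block_restrict Bl K u" and ?uL = "block_restrict Bl L u" and ?vM = "block_restrict Bl M v"
  have "norm ?uK + norm ?uL \<le> sqrt 2 * norm (block_restrict Bl (K \<union> L) u)"
  proof (rule power2_le_imp_le)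
    have "(norm ?uK + norm ?uL)^2 \<le> 2 * ((norm ?uK)^2 + (norm ?uL)^2)"
      using sum_squares_ge_zero[of "norm ?uK - norm ?uL" 0] by (simp add: power2_eq_square algebra_simps)
    then show "(norm ?uK + norm ?uL)^2 \<le> (sqrt 2 * norm (block_restrict Bl (K \<union> L) u))^2"
      using norm_block_restrict_union_squared[OF disjoint(1)] by (simp add: power_mult_distrib)
  qed simp
  have "\<bar>inner (A *v block_restrict Bl (K \<union> L) u) (A *v ?vM)\<bar>
      \<le> \<bar>inner (A *v ?uK) (A *v ?vM)\<bar> + \<bar>inner (A *v ?uL) (A *v ?vM)\<bar>"
    by (simp add: block_restrict_union[OF disjoint(1), symmetric] matrix_vector_right_distrib inner_add_left)
  also have "\<dots> \<le> \<delta> * norm ?uK * norm ?vM + \<delta> * norm ?uL * norm ?vM"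
    using disjoint size by (intro add_mono inner_block_restrict_le_rip[OF rip]) auto
  also have "\<dots> = \<delta> * (norm ?uK + norm ?uL) * norm ?vM"
    by (simp add: algebra_simps)
  also have "\<dots> \<le> \<delta> * (sqrt 2 * norm (block_restrict Bl (K \<union> L) u)) * norm ?vM"
    using \<open>norm ?uK + norm ?uL \<le> _\<close> \<open>0 \<le> \<delta>\<close> by (intro mult_right_mono mult_left_mono) auto
  finally show ?thesis by (simp add: mult_ac)
qed

context
  fixes s :: real and v :: "real^'n" and R :: "'b set" and C :: "nat \<Rightarrow> 'b set" and k :: nat
  assumes chunks: "ordered_chunks w s (block_ratio v) R C k" and s_pos: "0 < s"
begin

lemma wnorm21_on_chunks: "wnorm21_on Bl w R v = (\<Sum>j<k. wnorm21_on Bl w (C j) v)"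
  using wnorm21_on_UN[of "{..<k}" C v] ordered_chunks_cover[OF chunks] ordered_chunks_disjoint[OF chunks]
  by simp

lemma chunk_norm_le:
  "norm (block_restrict Bl (C (Suc j)) v)
     \<le> (wnorm21_on Bl w (C j) v + wnorm21_on Bl w (C (Suc j)) v) / sqrt (2 * s)"
  (is "?n \<le> (?p + ?q) / _")
proof (cases "C (Suc j) = {}")
  case False
  have "?n^2 * (s / 2) \<le> ?n^2 * weight_sum w (C j)"
    by (rule mult_left_mono) (use ordered_chunks_heavy[OF chunks, of j "Suc j"] False in auto)
  also have "\<dots> \<le> ?p * ?q"
    using ordered_chunks_ordered[OF chunks, of j "Suc j"] by (intro norm_squared_weight_sum_le_wnorm21_on) auto
  also have "\<dots> \<le> (?p + ?q)^2 / 4"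
    by (rule product_le_square_of_sum)
  finally have "?n^2 \<le> ((?p + ?q) / sqrt (2 * s))^2"
    using s_pos by (simp add: power_divide field_simps)
  then show ?thesis
    by (rule power2_le_imp_le)
      (intro divide_nonneg_nonneg add_nonneg_nonneg wnorm21_on_nonneg; simp add: less_imp_le[OF s_pos])
qed (simp add: divide_nonneg_nonneg wnorm21_on_nonneg less_imp_le[OF s_pos])

lemma sum_chunk_norms_le:
  "(\<Sum>j<k. norm (block_restrict Bl (C (Suc j)) v)) \<le> sqrt 2 * wnorm21_on Bl w R v / sqrt s"
proof -
  define p where "p j = wnorm21_on Bl w (C j) v" for j
  have "(\<Sum>j<Suc k. p j) = wnorm21_on Bl w R v"
    using wnorm21_on_chunks ordered_chunks_empty[OF chunks, of k] by (simp add: p_def wnorm21_on_def)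
  then have shifted: "(\<Sum>j<k. p (Suc j)) \<le> wnorm21_on Bl w R v"
    unfolding sum.lessThan_Suc_shift using wnorm21_on_nonneg[of "C 0" v] by (simp add: p_def)
  have "(\<Sum>j<k. norm (block_restrict Bl (C (Suc j)) v)) \<le> (\<Sum>j<k. (p j + p (Suc j)) / sqrt (2 * s))"
    unfolding p_def by (intro sum_mono chunk_norm_le)
  also have "\<dots> = ((\<Sum>j<k. p j) + (\<Sum>j<k. p (Suc j))) / sqrt (2 * s)"
    unfolding sum_divide_distrib[symmetric] sum.distrib ..
  also have "\<dots> \<le> 2 * wnorm21_on Bl w R v / sqrt (2 * s)"
    by (rule divide_right_mono)
      (use shifted wnorm21_on_chunks in \<open>simp_all add: p_def less_imp_le[OF s_pos]\<close>)
  also have "\<dots> = sqrt 2 * wnorm21_on Bl w R v / sqrt s"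
    using s_pos real_sqrt_mult_self[of 2] by (simp add: real_sqrt_mult field_simps)
  finally show ?thesis .
qed

lemma remainder_norm_le:
  "norm (block_restrict Bl (R - C 0) v) \<le> wnorm21_on Bl w R v / sqrt (2 * s)"
  (is "?n \<le> ?L / _")
proof (cases "R - C 0 = {}")
  case False
  let ?p = "wnorm21_on Bl w (C 0) v"
  have tail: "R - C 0 = (\<Union>j<k. C (Suc j))"
    using ordered_chunks_tail_cover[OF chunks] by simp
  with False obtain j where "C (Suc j) \<noteq> {}" by auto
  then have "?n^2 * (s / 2) \<le> ?n^2 * weight_sum w (C 0)"
    by (intro mult_left_mono ordered_chunks_heavy[OF chunks, of 0 "Suc j"]) auto
  also have "\<dots> \<le> ?p * wnorm21_on Bl w (R - C 0) v"
    using ordered_chunks_ordered[OF chunks, of 0] unfolding tail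
    by (intro norm_squared_weight_sum_le_wnorm21_on) blast
  also have "\<dots> = ?p * (?L - ?p)"
    using ordered_chunks_subset[OF chunks, of 0] by (simp add: wnorm21_on_diff)
  also have "\<dots> \<le> ?L^2 / 4"
    using product_le_square_of_sum[of ?p "?L - ?p"] by simp
  finally have "?n^2 \<le> (?L / sqrt (2 * s))^2"
    using s_pos by (simp add: power_divide field_simps)
  then show ?thesis
    by (rule power2_le_imp_le) (intro divide_nonneg_nonneg wnorm21_on_nonneg; simp add: less_imp_le[OF s_pos])
next
  case True
  then show ?thesis
    by (simp only: True) (simp add: divide_nonneg_nonneg wnorm21_on_nonneg less_imp_le[OF s_pos])
qed

end

lemma weight_square_le_of_winf:
  assumes "2 * (winf w)^2 \<le> s"
  shows "(w b)^2 \<le> s / 2"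
proof -
  have "w b \<le> winf w" unfolding winf_def by (rule Max_ge) auto
  then have "(w b)^2 \<le> (winf w)^2" using weight_pos[of b] by (intro power_mono) auto
  then show ?thesis using assms by simp
qed

lemma pos_of_small_weights: "(\<And>b. (w b)^2 \<le> s / 2) \<Longrightarrow> 0 < s"
  using pos_of_bounded_squares[of w] weight_pos by (metis less_irrefl)

lemma robust_null_space_bound:
  fixes A :: "real^'n^'m" and v :: "real^'n"
  assumes rip: "rip_ineq Bl w A (2 * s) \<delta>" and "0 \<le> \<delta>"
    and small: "\<And>b. (w b)^2 \<le> s / 2" and T: "weight_sum w T \<le> s"
  obtains S where "S \<inter> T = {}"
    and "(1 - \<delta>) * norm (block_restrict Bl (T \<union> S) v)
           \<le> sqrt (1 + \<delta>) * norm (A *v v) + 2 * \<delta> * wnorm21_on Bl w (- T) v / sqrt s"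
    and "norm (block_restrict Bl (- T - S) v) \<le> wnorm21_on Bl w (- T) v / sqrt (2 * s)"
proof -
  have "0 < s" by (rule pos_of_small_weights[OF small])
  have "\<exists>C k. ordered_chunks w s (block_ratio v) (- T) C k"
    by (intro ordered_chunks_exist small) (metis weight_pos less_irrefl)
  then obtain C k where chunks: "ordered_chunks w s (block_ratio v) (- T) C k" by blast
  define S where "S = C 0"
  define u where "u = block_restrict Bl (T \<union> S) v"
  define t where "t j = block_restrict Bl (C (Suc j)) v" for j
  let ?L = "wnorm21_on Bl w (- T) v"
  have ST: "S \<inter> T = {}"
    using ordered_chunks_subset[OF chunks, of 0] unfolding S_def by blast
  have "(\<Sum>j<k. t j) = block_restrict Bl (- T - S) v"
    unfolding t_def S_def ordered_chunks_tail_cover[OF chunks, symmetric]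
    using ordered_chunks_disjoint[OF chunks] by (intro block_restrict_UN) auto
  then have "v = u + (\<Sum>j<k. t j)"
    unfolding u_def using block_restrict_compl[of "T \<union> S" v] by (simp add: Diff_eq Int_commute)
  then have Av: "A *v v = A *v u + (\<Sum>j<k. A *v t j)"
    by (simp add: matrix_vector_right_distrib linear_sum[OF matrix_vector_mul_linear])
  have "wsupp_size Bl w u \<le> 2 * s"
    using wsupp_size_block_restrict_le[of "T \<union> S" v] weight_sum_union_le[of w T S]
      T ordered_chunks_weight[OF chunks, of 0] unfolding u_def S_def by linarith
  then have rip_u: "(1 - \<delta>) * (norm u)^2 \<le> (norm (A *v u))^2" "(norm (A *v u))^2 \<le> (1 + \<delta>) * (norm u)^2"
    using rip unfolding rip_ineq_def by auto
  have "norm (A *v u) \<le> sqrt ((1 + \<delta>) * (norm u)^2)"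
    using rip_u(2) by (rule real_le_rsqrt)
  then have Au: "norm (A *v u) \<le> sqrt (1 + \<delta>) * norm u"
    by (simp add: real_sqrt_mult)
  have inner_tail: "\<bar>inner (A *v u) (A *v t j)\<bar> \<le> sqrt 2 * \<delta> * norm u * norm (t j)" if "j < k" for j
  proof -
    have "C (Suc j) \<inter> T = {}" "C (Suc j) \<inter> S = {}"
      using ordered_chunks_subset[OF chunks, of "Suc j"] ordered_chunks_disjoint[OF chunks, of 0 "Suc j"]
      unfolding S_def by auto
    moreover have "weight_sum w (T \<union> C (Suc j)) \<le> 2 * s" "weight_sum w (S \<union> C (Suc j)) \<le> 2 * s"
      using weight_sum_union_le[of w T "C (Suc j)"] weight_sum_union_le[of w S "C (Suc j)"] T
        ordered_chunks_weight[OF chunks, of 0] ordered_chunks_weight[OF chunks, of "Suc j"]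
      unfolding S_def by linarith+
    ultimately show ?thesis
      unfolding u_def t_def using ST \<open>0 \<le> \<delta>\<close>
      by (intro inner_block_restrict_union_le_rip[OF rip]) auto
  qed
  have "(1 - \<delta>) * (norm u)^2 \<le> inner (A *v u) (A *v v) - (\<Sum>j<k. inner (A *v u) (A *v t j))"
    using rip_u(1) unfolding Av by (simp add: inner_add_right inner_sum_right power2_norm_eq_inner)
  also have "\<dots> \<le> norm (A *v u) * norm (A *v v) + (\<Sum>j<k. sqrt 2 * \<delta> * norm u * norm (t j))"
  proof -
    have "- (\<Sum>j<k. inner (A *v u) (A *v t j)) \<le> (\<Sum>j<k. sqrt 2 * \<delta> * norm u * norm (t j))"
      unfolding sum_negf[symmetric] using inner_tail by (intro sum_mono) (simp add: abs_le_iff)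
    then show ?thesis using norm_cauchy_schwarz[of "A *v u" "A *v v"] by linarith
  qed
  also have "\<dots> \<le> norm u * (sqrt (1 + \<delta>) * norm (A *v v) + 2 * \<delta> * ?L / sqrt s)"
  proof -
    have "(\<Sum>j<k. sqrt 2 * \<delta> * norm u * norm (t j)) = sqrt 2 * \<delta> * norm u * (\<Sum>j<k. norm (t j))"
      by (simp add: sum_distrib_left)
    also have "\<dots> \<le> sqrt 2 * \<delta> * norm u * (sqrt 2 * ?L / sqrt s)"
      using sum_chunk_norms_le[OF chunks \<open>0 < s\<close>] \<open>0 \<le> \<delta>\<close> unfolding t_def
      by (intro mult_left_mono) auto
    also have "\<dots> = (sqrt 2 * sqrt 2) * \<delta> * norm u * ?L / sqrt s"
      by (simp add: algebra_simps)
    finally show ?thesis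
      using mult_right_mono[OF Au, of "norm (A *v v)"] by (simp add: algebra_simps)
  qed
  finally have "(1 - \<delta>) * norm u \<le> sqrt (1 + \<delta>) * norm (A *v v) + 2 * \<delta> * ?L / sqrt s"
    using \<open>0 \<le> \<delta>\<close> \<open>0 < s\<close> wnorm21_on_nonneg[of "- T" v]
    by (cases "norm u = 0") (simp_all add: power2_eq_square mult_le_cancel_right_pos)
  moreover have "norm (block_restrict Bl (- T - S) v) \<le> ?L / sqrt (2 * s)"
    unfolding S_def by (rule remainder_norm_le[OF chunks \<open>0 < s\<close>])
  ultimately show ?thesis
    using that ST unfolding u_def by blast
qed

lemma sigma_w_nonneg: "0 \<le> s \<Longrightarrow> 0 \<le> sigma_w Bl w s x"
  using le_affine_sigma_w[where a = 0 and \<alpha> = 1 and \<beta> = 0 and w = w and Bl = Bl]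
    wnorm21_on_nonneg by (simp add: wnorm21_eq_wnorm21_on)

lemma recovery_error_le:
  fixes A :: "real^'n^'m"
  assumes rip: "rip_ineq Bl w A (2 * s) \<delta>" and "0 \<le> \<delta>" "3 * \<delta> < 1"
    and small: "\<And>b. (w b)^2 \<le> s / 2"
    and cone: "wnorm21 Bl w xh \<le> wnorm21 Bl w x" and tube: "norm (A *v (xh - x)) \<le> 2 * \<eta>"
    and z: "wsupp_size Bl w z \<le> s"
  defines "C \<equiv> 2 * (1 + \<delta>) / (1 - 3 * \<delta>)" and "D \<equiv> 4 * sqrt (1 + \<delta>) / (1 - 3 * \<delta>)"
  shows "norm (xh - x) \<le> C / sqrt s * wnorm21 Bl w (x - z) + D * \<eta>"
    and "wnorm21 Bl w (xh - x) \<le> C * wnorm21 Bl w (x - z) + D * sqrt s * \<eta>"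
proof -
  define v where "v = xh - x"
  define T where "T = block_support Bl z"
  define r where "r = sqrt s"
  define \<sigma> where "\<sigma> = wnorm21 Bl w (x - z)"
  have "0 < s" by (rule pos_of_small_weights[OF small])
  then have "0 < r" unfolding r_def by simp
  have T_size: "weight_sum w T \<le> s"
    using z unfolding T_def wsupp_size_eq_weight_sum .
  obtain S where "S \<inter> T = {}"
    and head: "(1 - \<delta>) * norm (block_restrict Bl (T \<union> S) v)
        \<le> sqrt (1 + \<delta>) * norm (A *v v) + 2 * \<delta> * wnorm21_on Bl w (- T) v / sqrt s"
    and rest: "norm (block_restrict Bl (- T - S) v) \<le> wnorm21_on Bl w (- T) v / sqrt (2 * s)"
    by (rule robust_null_space_bound[OF rip \<open>0 \<le> \<delta>\<close> small T_size])
  define N where "N = norm (block_restrict Bl (T \<union> S) v)"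
  define L where "L = wnorm21_on Bl w (- T) v"
  have "(norm (block_restrict Bl T v))^2 \<le> N^2"
    unfolding N_def using norm_block_restrict_union_squared[of T S v] \<open>S \<inter> T = {}\<close>
    by (simp add: Int_commute)
  then have "norm (block_restrict Bl T v) \<le> N"
    by (rule power2_le_imp_le) (simp add: N_def)
  moreover have "sqrt (weight_sum w T) \<le> r"
    unfolding r_def using T_size by simp
  ultimately have head_l1: "wnorm21_on Bl w T v \<le> r * N"
    using wnorm21_on_le_sqrt_weight_sum[of T v] \<open>0 < r\<close> mult_mono[of "sqrt (weight_sum w T)" r] by force
  have tail_l1: "L \<le> r * N + 2 * \<sigma>"
    using wnorm21_on_diff_compl_le[OF cone, of T] wnorm21_on_compl_support_le[of z x] head_l1
    unfolding L_def v_def T_def \<sigma>_def by linarith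
  have key: "2 * N + 2 * \<sigma> / r \<le> C / r * \<sigma> + D * \<eta>"
    using robust_recovery_arith[OF \<open>0 \<le> \<delta>\<close> \<open>3 * \<delta> < 1\<close> \<open>0 < r\<close> tube[folded v_def]
        head[folded N_def r_def] tail_l1[unfolded L_def]]
    unfolding C_def D_def by simp
  have "norm v \<le> N + norm (block_restrict Bl (- T - S) v)"
    using norm_triangle_ineq[of "block_restrict Bl (T \<union> S) v" "block_restrict Bl (- (T \<union> S)) v"]
    unfolding block_restrict_compl N_def by (simp add: Diff_eq)
  also have "\<dots> \<le> N + L / r"
    using rest divide_left_mono[of "sqrt s" "sqrt (2 * s)" L] wnorm21_on_nonneg[of "- T" v] \<open>0 < s\<close>
    unfolding L_def r_def by simp
  also have "\<dots> \<le> N + (r * N + 2 * \<sigma>) / r"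
    using tail_l1 \<open>0 < r\<close> by (simp add: divide_right_mono)
  also have "\<dots> = 2 * N + 2 * \<sigma> / r"
    using \<open>0 < r\<close> by (simp add: add_divide_distrib)
  finally show "norm (xh - x) \<le> C / sqrt s * wnorm21 Bl w (x - z) + D * \<eta>"
    using key unfolding v_def r_def \<sigma>_def by linarith
  have "wnorm21 Bl w v \<le> r * (2 * N + 2 * \<sigma> / r)"
    using head_l1 tail_l1 \<open>0 < r\<close> unfolding wnorm21_eq_wnorm21_on wnorm21_on_compl[of _ T] L_def
    by (simp add: algebra_simps)
  also have "\<dots> \<le> r * (C / r * \<sigma> + D * \<eta>)"
    using key \<open>0 < r\<close> by simp
  finally show "wnorm21 Bl w (xh - x) \<le> C * wnorm21 Bl w (x - z) + D * sqrt s * \<eta>"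
    using \<open>0 < r\<close> unfolding v_def r_def \<sigma>_def by (simp add: algebra_simps)
qed

lemma recovery_error_le_sigma_w:
  fixes A :: "real^'n^'m"
  assumes rip: "rip_ineq Bl w A (2 * s) \<delta>" and "0 \<le> \<delta>" "3 * \<delta> < 1"
    and small: "\<And>b. (w b)^2 \<le> s / 2"
    and cone: "wnorm21 Bl w xh \<le> wnorm21 Bl w x" and tube: "norm (A *v (xh - x)) \<le> 2 * \<eta>"
  defines "C \<equiv> 2 * (1 + \<delta>) / (1 - 3 * \<delta>)" and "D \<equiv> 4 * sqrt (1 + \<delta>) / (1 - 3 * \<delta>)"
  shows "wnorm21 Bl w (x - xh) \<le> C * sigma_w Bl w s x + D * sqrt s * \<eta>"
    and "norm (x - xh) \<le> C / sqrt s * sigma_w Bl w s x + D * \<eta>"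
proof -
  note error = recovery_error_le[OF rip \<open>0 \<le> \<delta>\<close> \<open>3 * \<delta> < 1\<close> small cone tube, folded C_def D_def]
  have "0 < s" by (rule pos_of_small_weights[OF small])
  have "0 < C" unfolding C_def using \<open>0 \<le> \<delta>\<close> \<open>3 * \<delta> < 1\<close> by simp
  show "wnorm21 Bl w (x - xh) \<le> C * sigma_w Bl w s x + D * sqrt s * \<eta>"
    using error(2) \<open>0 < C\<close> \<open>0 < s\<close> by (intro le_affine_sigma_w) (simp_all add: wnorm21_commute)
  show "norm (x - xh) \<le> C / sqrt s * sigma_w Bl w s x + D * \<eta>"
    using error(1) \<open>0 < C\<close> \<open>0 < s\<close> by (intro le_affine_sigma_w) (simp_all add: norm_minus_commute)
qed

end

theorem mainTheorem7:
  fixes A :: "real^'n::finite^'m::finite"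
    and Bl :: "'b::finite \<Rightarrow> 'n set" and w :: "'b \<Rightarrow> real"
    and s \<eta> :: real and x xh :: "real^'n" and e y :: "real^'m"
  assumes "block_structure Bl"
    and "\<forall>b. w b \<ge> 1"
    and "s \<ge> 2 * (winf w)^2"
    and "wbrip Bl w A (2 * s)"
    and "wbrip_const Bl w A (2 * s) < 1 / (2 * sqrt 2 + 1)"
    and "y = A *v x + e" and "norm e \<le> \<eta>"
    and "norm (A *v xh - y) \<le> \<eta>"
    and "\<forall>z. norm (A *v z - y) \<le> \<eta> \<longrightarrow> wnorm21 Bl w xh \<le> wnorm21 Bl w z"
  shows "let \<delta> = wbrip_const Bl w A (2 * s);
             c = 2 * (1 + \<delta> * (2 * sqrt 2 - 3))^2 / ((1 - \<delta>) * (1 - \<delta> * (2 * sqrt 2 + 1)));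
             d = 2 * (3 + \<delta> * (2 * sqrt 2 - 3)) * sqrt (1 + \<delta>) / ((1 - \<delta>) * (1 - \<delta> * (2 * sqrt 2 + 1)))
         in wnorm21 Bl w (x - xh) \<le> c * sigma_w Bl w s x + d * sqrt s * \<eta>
          \<and> norm (x - xh) \<le> c / sqrt s * sigma_w Bl w s x + d * \<eta>"
proof -
  interpret weighted_blocks Bl w
    using assms(1,2) by unfold_locales auto
  define \<delta> where "\<delta> = wbrip_const Bl w A (2 * s)"
  have "0 \<le> \<delta>" unfolding \<delta>_def by (rule wbrip_const_nonneg[OF assms(4)])
  note constants = recovery_constants_le[OF \<open>0 \<le> \<delta>\<close> assms(5)[folded \<delta>_def]]
  have rip: "rip_ineq Bl w A (2 * s) \<delta>"
    unfolding \<delta>_def by (rule rip_ineq_wbrip_const[OF assms(4)])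
  note minimizer = constrained_minimizer_cone_tube[OF assms(6-8), of "wnorm21 Bl w"]
  note error = recovery_error_le_sigma_w[OF rip \<open>0 \<le> \<delta>\<close> constants(1)
      weight_square_le_of_winf[OF assms(3)] minimizer[OF assms(9)]]
  have "0 < s" by (rule pos_of_small_weights[OF weight_square_le_of_winf[OF assms(3)]])
  have "0 \<le> sigma_w Bl w s x" "0 \<le> \<eta>"
    using sigma_w_nonneg[of s x] \<open>0 < s\<close> assms(7) norm_ge_zero[of e] by linarith+
  then show ?thesis
    unfolding Let_def \<delta>_def[symmetric] using error constants(2,3) \<open>0 < s\<close>
    by (smt (verit) divide_right_mono mult_right_mono real_sqrt_gt_zero mult_nonneg_nonneg)
qed

end
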